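(* Let $a>0$, $b>0$, $c\ge 1$ and $d\ge 1$ be real numbers such that $a-ad+c>0$ and $b-bc+d>0$. Then $$\frac{d(a+1)(c+d-1)}{a+c+d}+\frac{c(a+c-ad)}{a+c}+a+\frac{b(ab+ad+bc)}{b+d}+\frac{(1+b)(b+d-bc)}{b+c+d}- \frac{3\sqrt{5}-5}{2}(a+b+c+d+ab)\ge 0,$$ with equality if and only if $a=b=(\sqrt{5}-1)/2$ and $c=d=1$. *)

theory Defs
  imports Complex_Main
begin

end

theory Submission
  imports Defs
begin

(* With S = a + b + c + d + a b, the left-hand side equals
     S - 1 + (a + c - a d)^2 / ((a + c) (a + c + d)) + (b + d - b c)^2 / ((b + d) (b + c + d)),
   so E = tau S - 1 + (two nonnegative fractions), where tau = (7 - 3 sqrt 5)/2.  If tau S > 1 we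
   are done.  Otherwise S <= 1/tau = (7 + 3 sqrt 5)/2, and each fraction u^2 / (A A') is bounded
   below by (2 n u - n^2 A) / A', the tangent of u^2/A, for a slope n that depends linearly on
   the variables and is exact at the equality point.  The numerator of the resulting lower bound
   is a polynomial, and its nonnegativity on this region, with equality only at the equality
   point, is witnessed by an explicit Positivstellensatz certificate over Q(sqrt 5). *)

lemma sqrt5_bounds: "2236067/1000000 < sqrt (5::real)" "sqrt (5::real) < 2236068/1000000"
  by (rule real_less_rsqrt real_less_lsqrt; simp add: power2_eq_square)+

lemma fraction_sum_decomposition:
  fixes a b c d :: real
  assumes "a + c \<noteq> 0" "a + c + d \<noteq> 0" "b + d \<noteq> 0" "b + c + d \<noteq> 0"
  shows "d * (a + 1) * (c + d - 1) / (a + c + d) + c * (a + c - a * d) / (a + c) + a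
      + b * (a * b + a * d + b * c) / (b + d) + (1 + b) * (b + d - b * c) / (b + c + d)
    = (a + b + c + d + a * b) - 1
      + (a + c - a * d)^2 / ((a + c) * (a + c + d)) + (b + d - b * c)^2 / ((b + d) * (b + c + d))"
proof -
  define A A' B B' where "A = a + c" and "A' = a + c + d" and "B = b + d" and "B' = b + c + d"
  have "A \<noteq> 0" "A' \<noteq> 0" "B \<noteq> 0" "B' \<noteq> 0"
    using assms unfolding A_def A'_def B_def B'_def by simp_all
  then have "d * (a + 1) * (c + d - 1) / A' + c * (a + c - a * d) / A + a
      + b * (a * b + a * d + b * c) / B + (1 + b) * (b + d - b * c) / B'
    = (a + b + c + d + a * b) - 1 + (a + c - a * d)^2 / (A * A') + (b + d - b * c)^2 / (B * B')"
    by (simp add: field_simps) (simp only: A_def A'_def B_def B'_def, algebra)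
  then show ?thesis
    unfolding A_def A'_def B_def B'_def .
qed

definition excess :: "real \<Rightarrow> real \<Rightarrow> real \<Rightarrow> real \<Rightarrow> real" where
  "excess a b c d = (7 - 3 * sqrt 5) / 2 * (a + b + c + d + a * b) - 1
     + (a + c - a * d)^2 / ((a + c) * (a + c + d)) + (b + d - b * c)^2 / ((b + d) * (b + c + d))"

lemma excess_at_golden_point: "excess ((sqrt 5 - 1) / 2) ((sqrt 5 - 1) / 2) 1 1 = 0"
proof -
  define s :: real where "s = sqrt 5"
  define g where "g = (s - 1) / 2"
  have s2: "s * s = 5" and "0 < s"
    unfolding s_def by simp_all
  have "(7 - 3 * s) / 2 * (g + g + 1 + 1 + g * g) = 5 - 2 * s + (s * s - 5) * (1 - 3 * s) / 8"
    unfolding g_def by (simp add: field_simps)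
  then have S: "(7 - 3 * s) / 2 * (g + g + 1 + 1 + g * g) = 5 - 2 * s"
    using s2 by simp
  have "(g + 1) * (g + 1 + 1) = s + 2 + (s * s - 5) / 4"
    unfolding g_def by (simp add: field_simps)
  then have "(g + 1) * (g + 1 + 1) = s + 2"
    using s2 by simp
  moreover have "(s - 2) * (s + 2) = 1"
    using s2 by (simp add: algebra_simps)
  ultimately have U: "(g + 1 - g * 1)^2 / ((g + 1) * (g + 1 + 1)) = s - 2"
    using \<open>0 < s\<close> by (simp add: field_simps)
  show ?thesis
    unfolding excess_def s_def[symmetric] g_def[symmetric] S U by simp
qed

lemma square_div_ge_tangent:
  fixes u n A A' :: real
  assumes "0 < A" "0 < A'"
  shows "(2 * n * u - n^2 * A) / A' \<le> u^2 / (A * A')"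
proof -
  have "u^2 / (A * A') - (2 * n * u - n^2 * A) / A' = (u - n * A)^2 / (A * A')"
    using assms by (simp add: field_simps power2_eq_square)
  moreover have "0 \<le> (u - n * A)^2 / (A * A')"
    using assms by simp
  ultimately show ?thesis by linarith
qed

(* Sixteen times the tangent slope.  At the equality point the slope is (s - 1)/2, which is the
   ratio (a + c - a d)/(a + c) there, so the tangent bound is exact at that point. *)
definition slope_numerator :: "real \<Rightarrow> real \<Rightarrow> real \<Rightarrow> real \<Rightarrow> real" where
  "slope_numerator s a c d = 9 * (s - 1) - 2 * a + 2 * c - 2 * d"

definition tangent_bound_numerator :: "real \<Rightarrow> real \<Rightarrow> real \<Rightarrow> real \<Rightarrow> real \<Rightarrow> real" where
  "tangent_bound_numerator s a b c d =
     (a + c + d) * (b + c + d) * (128 * (7 - 3 * s) * (a + b + c + d + a * b) - 256)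
     + (b + c + d) * (32 * slope_numerator s a c d * (a + c - a * d)
                      - (slope_numerator s a c d)^2 * (a + c))
     + (a + c + d) * (32 * slope_numerator s b d c * (b + d - b * c)
                      - (slope_numerator s b d c)^2 * (b + d))"

lemma tangent_bound_le_excess:
  fixes a b c d :: real
  assumes "0 \<le> a" "0 \<le> b" "1 \<le> c" "1 \<le> d"
  shows "tangent_bound_numerator (sqrt 5) a b c d / (256 * (a + c + d) * (b + c + d))
    \<le> excess a b c d"
proof -
  define m m' where "m = slope_numerator (sqrt 5) a c d" and "m' = slope_numerator (sqrt 5) b d c"
  define A' B' where "A' = a + c + d" and "B' = b + c + d"
  have pos: "0 < a + c" "0 < A'" "0 < b + d" "0 < B'"
    using assms unfolding A'_def B'_def by linarith+
  have "tangent_bound_numerator (sqrt 5) a b c d / (256 * A' * B')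
      = (7 - 3 * sqrt 5) / 2 * (a + b + c + d + a * b) - 1
        + (2 * (m / 16) * (a + c - a * d) - (m / 16)^2 * (a + c)) / A'
        + (2 * (m' / 16) * (b + d - b * c) - (m' / 16)^2 * (b + d)) / B'"
    using pos unfolding tangent_bound_numerator_def m_def[symmetric] m'_def[symmetric]
      A'_def[symmetric] B'_def[symmetric]
    by (simp add: field_simps power2_eq_square)
  also have "\<dots> \<le> excess a b c d"
    using square_div_ge_tangent[OF pos(1,2), of "m / 16" "a + c - a * d"]
      square_div_ge_tangent[OF pos(3,4), of "m' / 16" "b + d - b * c"]
    unfolding excess_def A'_def B'_def by linarith
  finally show ?thesis unfolding A'_def B'_def .
qed

(* Here p, q, x, y are 2 a, 2 b, c, d shifted to the equality point (p = 2 a - s + 1, x = c - 1, ...),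
   and P, Q, R, T stand for the nonnegative quantities 2 a, 2 b, 2 (7 + 3 s) - 4 S and
   3 s + 7 - 2 c - 2 d.  Each summand is a coefficient that is positive for s = sqrt 5, times a
   product of x, y, P, Q, R, T, times a square. *)
definition certificate_remainder ::
    "real \<Rightarrow> real \<Rightarrow> real \<Rightarrow> real \<Rightarrow> real \<Rightarrow> real \<Rightarrow> real \<Rightarrow> real \<Rightarrow> real \<Rightarrow> real" where
  "certificate_remainder s p q x y P Q R T =
    754816 * (-60616*y + 20906*y^2 - 60616*x - 115010*x*y + 20906*x^2 + 56059*q + 55035*q*y + 88034*q*x + 56059*p + 88034*p*y + 55035*p*x + 32768*p*q)^2 +
    120056 * (-10296*y + 39338*y^2 - 51726*x - 66730*x*y - 42846*x^2 - 299*q + 14240*q*y - 14800*q*x + 47703*p + 118433*p*y + 65536*p*x)^2 +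
    862080 * (35970*y + 61486*y^2 - 33854*x + 2578*x*y - 61110*x^2 - 20809*q - 5645*q*y - 66160*q*x + 19786*p + 65536*p*y)^2 +
    369440 * (-25394*y - 20032*y^2 - 5656*x - 31996*x*y + 19476*x^2 + 25144*q + 26233*q*y + 65536*q*x + 1380*p)^2 +
    48792 * (9940*y + 27828*y^2 - 32054*x - 27612*x*y - 32326*x^2 + 9657*q + 65536*q*y - 309*p)^2 +
    253576 * (71760*y + 101458*y^2 + 74932*x + 183118*x*y + 131072*x^2 - 13012*q - 12801*p)^2 +
    541216 * (18930*y + 38769*y^2 + 14777*x + 65536*x*y - 5003*q - 5279*p)^2 +
    54288 * (34726*y + 131072*y^2 + 20686*x + 2005*q + 1071*p)^2 +
    93688 * x * (-23072*y + 7976*x - 687*q + 65536*p)^2 +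
    2021632 * x * (-5781*y + 1884*x + 16384*q)^2 +
    1748736 * x * (5319*y + 32768*x)^2 +
    1586595278880768 * x * y^2 +
    126360 * y * (7474*y - 22942*x - 509*q + 65536*p)^2 +
    374720 * y * (4028*y - 11657*x + 32768*q)^2 +
    380928 * y * (12209*y + 65536*x)^2 +
    1820928694550528 * y * y^2 +
    11732 * P * (38626*y - 1320*x + 19589*q + 65536*p)^2 +
    764800 * P * (-2392*y - 3911*x + 16384*q)^2 +
    183168 * P * (-13785*y + 65536*x)^2 +
    747049431597056 * P * y^2 +
    48852 * Q * (-15402*y - 6590*x + 4705*q + 65536*p)^2 +
    45920 * Q * (1678*y + 20743*x + 32768*q)^2 +
    728192 * Q * (-6935*y + 32768*x)^2 +
    751653636538368 * Q * y^2 +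
    258894 * R * (-89180*y - 70244*x + 29247*q + 65536*p)^2 +
    829328 * R * (-19008*y - 36107*x + 32768*q)^2 +
    2775040 * R * (1455*y + 8192*x)^2 +
    180354266693632 * R * y^2 +
    25180 * T * (-56532*y - 18910*x + 14679*q + 65536*p)^2 +
    95664 * T * (-3289*y - 27529*x + 32768*q)^2 +
    10552320 * T * (-3299*y + 8192*x)^2 +
    593323962138624 * T * y^2 +
    9616 * P*x * (254560*y - 589338*x - 186917*q + 65536*p)^2 +
    1797632 * P*x * (-11505*y + 24381*x + 16384*q)^2 +
    1398848 * P*x * (-1097*y + 32768*x)^2 +
    639915767365632 * P*x * y^2 +
    153856 * P*y * (33749*y + 18665*x + 3991*q + 16384*p)^2 +
    1367552 * P*y * (28531*y - 11431*x + 16384*q)^2 +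
    144480 * P*y * (-6469*y + 65536*x)^2 +
    1750147633512448 * P*y * y^2 +
    344176 * Q*x * (-21694*y + 58521*x + 892*q + 32768*p)^2 +
    38208 * Q*x * (42899*y + 53598*x + 32768*q)^2 +
    1635584 * Q*x * (-1143*y + 32768*x)^2 +
    618406571147264 * Q*x * y^2 +
    762336 * Q*y * (71156*y - 31883*x - 4716*q + 32768*p)^2 +
    22672 * Q*y * (-155594*y + 61651*x + 32768*q)^2 +
    38244352 * Q*y * (-321*y + 4096*x)^2 +
    1498015873368064 * Q*y * y^2 +
    908696 * P*Q * (21339*y + 9928*x + 24896*q + 32768*p)^2 +
    24586752 * P*Q * (-1858*y + 4079*x + 4096*q)^2 +
    1112832 * P*Q * (-23533*y + 32768*x)^2 +
    578583634378752 * P*Q * y^2 +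
    1128528 * T*x * (-31890*y + 25135*x - 3*q + 32768*p)^2 +
    1636320 * T*x * (-32429*y - 16172*x + 32768*q)^2 +
    4915392 * T*x * (503*y + 32768*x)^2 +
    677848918523904 * T*x * y^2 +
    1644704 * T*y * (-16091*y - 32262*x - 2*q + 32768*p)^2 +
    1136928 * T*y * (24948*y - 31657*x + 32768*q)^2 +
    170528 * T*y * (7041*y + 65536*x)^2 +
    5312908904890368 * T*y * y^2 +
    2330624 * x*y * (32768 + 31612*y + 31612*x - 12659*q - 12659*p)^2 +
    3292448 * x*y * (7204*y - 21436*x - 23183*q + 32768*p)^2 +
    1644416 * x*y * (-32715*y - 15941*x + 32768*q)^2 +
    6139264 * x*y * (-13041*y + 32768*x)^2 +
    5547998234804224 * x*y * y^2 +
    572982997024768 * x*y*P +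
    572982997024768 * x*y*Q +
    515361715781632 * x*y*R +
    204062486167552 * x*x*R +
    204062486167552 * y*y*R +
    483922555174912 * x*y*T +
    38626 * P*T * (8882*y - 83818*x + 126349*q + 65536*p)^2 +
    194656 * P*T * (1834*y - 35095*x + 32768*q)^2 +
    154296 * P*T * (-44333*y + 65536*x)^2 +
    310921272492032 * P*T * y^2 +
    768920 * Q*T * (-25119*y + 2185*x + 12694*q + 32768*p)^2 +
    39112 * Q*T * (25753*y + 905*x + 32768*q)^2 +
    572000 * Q*T * (-23917*y + 32768*x)^2 +
    335488485425152 * Q*T * y^2 +
    4586 * T*T * (-164612*y + 75626*x + 14533*q + 65536*p)^2 +
    69760 * T*T * (29482*y - 47691*x + 16384*q)^2 +
    89000 * T*T * (-53933*y + 65536*x)^2 +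
    123385820479488 * T*T * y^2 +
    (4522497115794748 - 2020535360147684*s) * (p*q)^2 +
    17930030572928 * (p*x)^2 +
    17906639446792 * (p*y)^2 +
    17898901413576 * (q*x)^2 +
    17999515133112 * (q*y)^2 +
    71908745143904 * (x^2)^2 +
    72298507348352 * (x*y)^2 +
    71996772182208 * (y^2)^2 +
    (38146310675628032*s - 85279674805731912) * p^2 +
    (38146334540690428*s - 85279679204573404) * q^2 +
    (1283554698688168752 - 573988290291994928*s) * x^2 +
    (1283553127427497280 - 573990395136377344*s) * y^2 +
    (112905983891283456 - 50484980145389824*s) * x * p^2 +
    (115489947071023616 - 51640376578789584*s) * x * q^2 +
    (47879712952991264 - 21380405082800928*s) * x * x^2 +
    (22422017835429056 - 9995042257119808*s) * x * y^2 +
    (115489836573613936 - 51640503451516928*s) * y * p^2 +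
    (112906071831482856 - 50485038992518056*s) * y * q^2 +
    (22421052165547776 - 9994754402358432*s) * y * x^2 +
    (47880574739063072 - 21380507950238912*s) * y * y^2 +
    (1121854047649792 - 497692220325888*s) * P * p^2 +
    (6372904247727210*s - 14241465453078858) * P * q^2 +
    (226732101234581016 - 101382108576002728*s) * P * x^2 +
    (362403729081867280 - 162056065783766864*s) * P * y^2 +
    (6372946554126336*s - 14241459460898816) * Q * p^2 +
    (1121876653502476 - 497694423880224*s) * Q * q^2 +
    (362403374190310256 - 162055858607988768*s) * Q * x^2 +
    (226732406293108992 - 101381928319687360*s) * Q * y^2 +
    4501125726208 * R * p^2 +
    4515622931378 * R * q^2 +
    (54043195528445952*s - 120826486482764704) * R * x^2 +
    (54043195528445952*s - 120826296339933016) * R * y^2 +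
    9019431321600 * P*x * p^2 +
    (60431234154751044 - 27021597764222976*s) * P*x * q^2 +
    36521412013840 * P*x * x^2 +
    36278959651456 * P*x * y^2 +
    9019431321600 * P*y * p^2 +
    (60431218655707508 - 27021597764222976*s) * P*y * q^2 +
    35590302611408 * P*y * x^2 +
    36058344066624 * P*y * y^2 +
    (60431172468473856 - 27021597764222976*s) * Q*x * p^2 +
    9021929811904 * Q*x * q^2 +
    36028285949040 * Q*x * x^2 +
    35965280015648 * Q*x * y^2 +
    (60431139517497344 - 27021597764222976*s) * Q*y * p^2 +
    9022578510016 * Q*y * q^2 +
    36213750685392 * Q*y * x^2 +
    36263448318336 * Q*y * y^2 +
    9022056934144 * T*x * p^2 +
    8947045352552 * T*x * q^2 +
    35961136671824 * T*x * x^2 +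
    36222599817152 * T*x * y^2 +
    (2712797507012396576 - 1213168907955413216*s) * x*y +
    (542278204028218512 - 242497914267533904*s) * x*y*P +
    (542278315826323488 - 242498228565735520*s) * x*y*Q +
    (108086391056891904*s - 241670344611268352) * x*y*R +
    (12851030857718441 - 5745126155624831*s) * (4*x + p*q)^2 +
    (12851038336366619 - 5745137366338973*s) * (4*y + p*q)^2 +
    (1546696042070880 - 683722945855488*s) * (q + p)^2 +
    (843711583092736*s - 1868673175444992) * (2*x + p)^2 +
    (1829297430944608 - 809940225359872*s) * (2*y + p)^2 +
    (1829215597596276 - 810015408016532*s) * (2*x + q)^2 +
    (843741957273328*s - 1868607064191192) * (2*y + q)^2"

lemma certificate_remainder_nonneg:
  fixes s p q x y P Q R T :: real
  assumes "2236067/1000000 < s" "s < 2236068/1000000"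
    and "0 \<le> x" "0 \<le> y" "0 \<le> P" "0 \<le> Q" "0 \<le> R" "0 \<le> T"
  shows "0 \<le> certificate_remainder s p q x y P Q R T"
  unfolding certificate_remainder_def
  by (intro add_nonneg_nonneg mult_nonneg_nonneg zero_le_power2 assms(3-8))
    (use assms(1,2) in linarith)+

lemma tangent_bound_numerator_nonneg:
  fixes s a b c d :: real
  assumes s: "s * s = 5" "2236067/1000000 < s" "s < 2236068/1000000"
    and "0 \<le> a" "0 \<le> b" "1 \<le> c" "1 \<le> d"
    and S: "a + b + c + d + a * b \<le> (7 + 3 * s) / 2"
  shows "0 \<le> tangent_bound_numerator s a b c d"
    and "tangent_bound_numerator s a b c d = 0 \<Longrightarrow> a = (s - 1) / 2 \<and> b = (s - 1) / 2 \<and> c = 1 \<and> d = 1"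
proof -
  define p q x y where "p = 2 * a - s + 1" and "q = 2 * b - s + 1" and "x = c - 1" and "y = d - 1"
  have "s * s - 5 = 0"
    using s(1) by simp
  have "4*s + 4 - (s + 1)*(p + q) - p*q - 4*x - 4*y
      = 2 * (7 + 3 * s) - 4 * (a + b + c + d + a * b) + (s * s - 5)"
    unfolding p_def q_def x_def y_def by algebra
  then have R: "0 \<le> 4*s + 4 - (s + 1)*(p + q) - p*q - 4*x - 4*y"
    using S unfolding s(1) by simp
  have T: "0 \<le> 3*s + 3 - 2*x - 2*y"
    using S mult_nonneg_nonneg[OF \<open>0 \<le> a\<close> \<open>0 \<le> b\<close>] \<open>0 \<le> a\<close> \<open>0 \<le> b\<close>
    unfolding x_def y_def by argo
  have rem: "0 \<le> certificate_remainder s p q x y (2 * a) (2 * b)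
      (4*s + 4 - (s + 1)*(p + q) - p*q - 4*x - 4*y) (3*s + 3 - 2*x - 2*y)"
    using s assms(4-7) R T unfolding x_def y_def by (intro certificate_remainder_nonneg) auto
  have cert: "2^49 * tangent_bound_numerator s a b c d =
    certificate_remainder s p q x y (2 * a) (2 * b)
      (4*s + 4 - (s + 1)*(p + q) - p*q - 4*x - 4*y) (3*s + 3 - 2*x - 2*y)
    + 59024 * (65536*p - 1125*q - 18928*x - 29028*y)^2 + 236032 * (32768*q - 14681*x - 9716*y)^2
    + 4213248 * (16384*x - 1937*y)^2 + 1115179668471808 * y^2"
    (is "?lhs = ?r + 59024 * ?l\<^sub>1^2 + 236032 * ?l\<^sub>2^2 + 4213248 * ?l\<^sub>3^2 + _")
    using \<open>s * s - 5 = 0\<close>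
    unfolding certificate_remainder_def tangent_bound_numerator_def slope_numerator_def
      p_def q_def x_def y_def
    by algebra
  have squares: "0 \<le> ?l\<^sub>1^2" "0 \<le> ?l\<^sub>2^2" "0 \<le> ?l\<^sub>3^2" "0 \<le> y^2"
    by simp_all
  have "0 \<le> ?lhs"
    using cert rem squares by linarith
  then show "0 \<le> tangent_bound_numerator s a b c d"
    by (simp add: zero_le_mult_iff)
  assume "tangent_bound_numerator s a b c d = 0"
  then have "?lhs = 0"
    by simp
  then have "?l\<^sub>1^2 = 0" "?l\<^sub>2^2 = 0" "?l\<^sub>3^2 = 0" "y^2 = 0"
    using cert rem squares by linarith+
  \<comment> \<open>The four explicit squares are triangular in y, x, q, p.\<close>
  then have "p = 0 \<and> q = 0 \<and> x = 0 \<and> y = 0"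
    by simp
  then show "a = (s - 1) / 2 \<and> b = (s - 1) / 2 \<and> c = 1 \<and> d = 1"
    unfolding p_def q_def x_def y_def by (simp add: field_simps)
qed

lemma excess_nonneg_and_eq_0_imp:
  fixes a b c d :: real
  assumes "0 \<le> a" "0 \<le> b" "1 \<le> c" "1 \<le> d"
  shows "0 \<le> excess a b c d \<and>
    (excess a b c d = 0 \<longrightarrow> a = (sqrt 5 - 1) / 2 \<and> b = (sqrt 5 - 1) / 2 \<and> c = 1 \<and> d = 1)"
proof (cases "1 < (7 - 3 * sqrt 5) / 2 * (a + b + c + d + a * b)")
  case True
  have "0 < a + c" "0 < b + d"
    using assms by linarith+
  then have "0 \<le> (a + c - a * d)^2 / ((a + c) * (a + c + d))"
    "0 \<le> (b + d - b * c)^2 / ((b + d) * (b + c + d))"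
    using assms by simp_all
  then have "0 < excess a b c d"
    using True unfolding excess_def by linarith
  then show ?thesis by simp
next
  case False
  define S where "S = a + b + c + d + a * b"
  have s: "sqrt 5 * sqrt 5 = (5::real)"
    by simp
  have "(7 + 3 * sqrt 5) / 2 * ((7 - 3 * sqrt 5) / 2) = (1::real)"
    using s by (simp add: algebra_simps)
  then have "S = (7 + 3 * sqrt 5) / 2 * ((7 - 3 * sqrt 5) / 2 * S)"
    by (simp add: mult.assoc[symmetric])
  also have "\<dots> \<le> (7 + 3 * sqrt 5) / 2"
    using False sqrt5_bounds unfolding S_def by (intro mult_left_le) auto
  finally have "S \<le> (7 + 3 * sqrt 5) / 2" .
  from tangent_bound_numerator_nonneg[OF s sqrt5_bounds assms this[unfolded S_def]]
  have N: "0 \<le> tangent_bound_numerator (sqrt 5) a b c d"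
    "tangent_bound_numerator (sqrt 5) a b c d = 0 \<Longrightarrow>
      a = (sqrt 5 - 1) / 2 \<and> b = (sqrt 5 - 1) / 2 \<and> c = 1 \<and> d = 1"
    by blast+
  have "0 < 256 * (a + c + d) * (b + c + d)"
    using assms by simp
  then have "0 \<le> tangent_bound_numerator (sqrt 5) a b c d / (256 * (a + c + d) * (b + c + d))"
    "excess a b c d = 0 \<Longrightarrow> tangent_bound_numerator (sqrt 5) a b c d = 0"
    using N(1) tangent_bound_le_excess[OF assms] by (auto simp: divide_le_0_iff)
  with N(2) tangent_bound_le_excess[OF assms] show ?thesis
    by auto
qed

theorem theorem4p1:
  fixes a b c d :: real
  assumes "a > 0" and "b > 0" and "c \<ge> 1" and "d \<ge> 1"
    and "a - a * d + c > 0" and "b - b * c + d > 0"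
  defines "E \<equiv> d * (a + 1) * (c + d - 1) / (a + c + d) + c * (a + c - a * d) / (a + c) + a
      + b * (a * b + a * d + b * c) / (b + d) + (1 + b) * (b + d - b * c) / (b + c + d)
      - (3 * sqrt 5 - 5) / 2 * (a + b + c + d + a * b)"
  shows "E \<ge> 0 \<and> (E = 0 \<longleftrightarrow> a = (sqrt 5 - 1) / 2 \<and> b = (sqrt 5 - 1) / 2 \<and> c = 1 \<and> d = 1)"
proof -
  have nz: "a + c \<noteq> 0" "a + c + d \<noteq> 0" "b + d \<noteq> 0" "b + c + d \<noteq> 0"
    using assms(1-4) by linarith+
  have coefficient: "(3 * sqrt 5 - 5) / 2 = 1 - (7 - 3 * sqrt 5) / (2::real)"
    by (simp add: field_simps)
  have "E = excess a b c d"
    unfolding E_def excess_def fraction_sum_decomposition[OF nz] coefficient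
    by (simp add: algebra_simps)
  moreover note excess_nonneg_and_eq_0_imp
    [OF less_imp_le[OF assms(1)] less_imp_le[OF assms(2)] assms(3,4)]
  ultimately show ?thesis
    using excess_at_golden_point by metis
qed

end
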